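(* Let $k\ge1$ be an integer and $n$ a positive integer with $n>\frac{k+2}{24}$. Then $$\frac{e^{\pi\sqrt{2n/3}}}{4n\sqrt3}\cdot\frac{\widehat L_2(k)}{n^{k/2}}<\frac{\sqrt{12}\,e^{\mu(n)}}{24n-1}\cdot\frac{1}{\mu(n)^k}<\frac{e^{\pi\sqrt{2n/3}}}{4n\sqrt3}\cdot\frac{\widehat U_2(k)}{n^{k/2}},$$ where $\widehat L_2(k)=\frac{1}{\alpha^k\,24^{k/2}}\left(1-\frac{1}{4\sqrt n}\right)$ and $\widehat U_2(k)=\frac{1}{\alpha^k\,24^{k/2}}\left(1+\frac{k}{3n}\right)$.
   Context: $\alpha=\pi/6$ and $\mu(n)=\frac{\pi}{6}\sqrt{24n-1}$. *)

theory Defs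
  imports Complex_Main
begin

definition alpha :: real where "alpha = pi / 6"

definition mu :: "nat \<Rightarrow> real" where
  "mu n = (pi / 6) * sqrt (24 * real n - 1)"

definition L2hat :: "nat \<Rightarrow> nat \<Rightarrow> real" where
  "L2hat n k = 1 / (alpha ^ k * 24 powr (real k / 2)) * (1 - 1 / (4 * sqrt (real n)))"

definition U2hat :: "nat \<Rightarrow> nat \<Rightarrow> real" where
  "U2hat n k = 1 / (alpha ^ k * 24 powr (real k / 2)) * (1 + real k / (3 * real n))"

end

theory Submission
  imports Defs
begin

text \<open>Put \<open>N = 24n - 1\<close>, so that \<open>\<mu>(n) = \<alpha>\<surd>N\<close> while \<open>\<pi>\<surd>(2n/3) = \<alpha>\<surd>(N+1)\<close>. With \<open>D\<close>
  the middle expression evaluated at \<open>\<alpha>\<surd>(N+1)\<close> instead of \<open>\<alpha>\<surd>N\<close>, the outer bounds are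
  \<open>D (1 - 1/(4\<surd>n))\<close> and \<open>D (1 + k/(3n))\<close>, and the middle expression is \<open>D\<close> times
  \<open>exp (\<alpha>(\<surd>N - \<surd>(N+1))) (\<surd>(N+1)/\<surd>N)^(k+2)\<close>. Since \<open>\<surd>(N+1) - \<surd>N < 1/\<surd>(N+1)\<close>, the
  exponential exceeds \<open>1 - \<alpha>/\<surd>(24n)\<close>; since \<open>\<surd>(N+1)/\<surd>N \<le> exp (1/(2N))\<close>, the power is at
  most \<open>exp ((k+2)/(2N)) \<le> 1 + (k+2)/N\<close>, which \<open>k + 2 < 24n\<close> bounds by \<open>1 + k/(3n)\<close>.\<close>

lemma exp_le_one_plus_double:
  fixes x :: real
  assumes "0 \<le> x" "x \<le> 1"
  shows "exp x \<le> 1 + 2 * x"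
proof -
  have "x\<^sup>2 \<le> x"
    using assms by (simp add: power2_eq_square mult_left_le)
  then show ?thesis
    using exp_bound[OF assms] by linarith
qed

lemma powr_half_nat_eq_sqrt_power:
  fixes x :: real
  assumes "0 < x"
  shows "x powr (real k / 2) = sqrt x ^ k"
proof -
  have "sqrt x ^ k = (x powr (1/2)) powr real k"
    using assms by (simp add: powr_half_sqrt powr_realpow)
  also have "\<dots> = x powr (real k / 2)"
    by (simp add: powr_powr)
  finally show ?thesis ..
qed

lemma sqrt_succ_minus_sqrt_less:
  fixes N :: real
  assumes "0 < N"
  shows "sqrt (N + 1) - sqrt N < 1 / sqrt (N + 1)"
proof -
  have "(sqrt (N + 1) - sqrt N) * (sqrt (N + 1) + sqrt N) = 1"
    using assms by (simp add: algebra_simps)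
  moreover have "0 < sqrt (N + 1) + sqrt N"
    using assms by (simp add: add_pos_pos)
  ultimately have "sqrt (N + 1) - sqrt N = 1 / (sqrt (N + 1) + sqrt N)"
    by (simp add: eq_divide_eq)
  also have "\<dots> < 1 / sqrt (N + 1)"
    by (rule divide_strict_left_mono) (use assms in \<open>simp_all add: add_pos_pos\<close>)
  finally show ?thesis .
qed

lemma sqrt_succ_div_sqrt_le:
  fixes N :: real
  assumes "0 < N"
  shows "sqrt (N + 1) / sqrt N \<le> 1 + 1 / (2 * N)"
proof (rule power2_le_imp_le)
  have "(sqrt (N + 1) / sqrt N)\<^sup>2 = 1 + 1 / N"
    using assms by (simp add: power_divide field_simps)
  also have "\<dots> \<le> (1 + 1 / (2 * N))\<^sup>2"
    using assms by (simp add: power2_eq_square field_simps)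
  finally show "(sqrt (N + 1) / sqrt N)\<^sup>2 \<le> (1 + 1 / (2 * N))\<^sup>2" .
qed (use assms in simp)

definition shift_factor :: "real \<Rightarrow> real \<Rightarrow> nat \<Rightarrow> real" where
  "shift_factor a N m = exp (a * (sqrt N - sqrt (N + 1))) * (sqrt (N + 1) / sqrt N) ^ m"

definition dominant_term :: "nat \<Rightarrow> nat \<Rightarrow> real" where
  "dominant_term n k = sqrt 12 * exp (alpha * sqrt (24 * real n))
                         / (24 * real n * (alpha * sqrt (24 * real n)) ^ k)"

lemma shift_factor_gt:
  fixes a N :: real
  assumes "0 < a" "a \<le> 1" "0 < N"
  shows "1 - a / sqrt (N + 1) < shift_factor a N m"
proof -
  have "1 - a / sqrt (N + 1) < 1 - a * (sqrt (N + 1) - sqrt N)"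
    using mult_strict_left_mono[OF sqrt_succ_minus_sqrt_less[OF \<open>0 < N\<close>] \<open>0 < a\<close>] by simp
  also have "\<dots> \<le> exp (a * (sqrt N - sqrt (N + 1)))"
    using exp_ge_add_one_self[of "a * (sqrt N - sqrt (N + 1))"] by (simp add: algebra_simps)
  also have "\<dots> \<le> exp (a * (sqrt N - sqrt (N + 1))) * (sqrt (N + 1) / sqrt N) ^ m"
    using assms by (intro mult_le_cancel_left1[THEN iffD2] disjI1 conjI one_le_power) auto
  finally show ?thesis
    unfolding shift_factor_def .
qed

lemma shift_factor_lt:
  fixes a N :: real
  assumes "0 < a" "0 < N" "real m \<le> 2 * N"
  shows "shift_factor a N m < 1 + real m / N"
proof -
  have "sqrt N < sqrt (N + 1)"
    by simp
  then have "exp (a * (sqrt N - sqrt (N + 1))) < 1"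
    using assms by (simp add: mult_pos_neg)
  moreover have "0 < (sqrt (N + 1) / sqrt N) ^ m"
    using assms by simp
  ultimately have "exp (a * (sqrt N - sqrt (N + 1))) * (sqrt (N + 1) / sqrt N) ^ m
      < (sqrt (N + 1) / sqrt N) ^ m"
    by simp
  also have "\<dots> \<le> (1 + 1 / (2 * N)) ^ m"
    using assms by (intro power_mono sqrt_succ_div_sqrt_le) auto
  also have "\<dots> \<le> exp (1 / (2 * N)) ^ m"
    using assms by (intro power_mono) (auto simp: add.commute exp_ge_add_one_self)
  also have "\<dots> = exp (real m / (2 * N))"
    by (simp add: exp_of_nat_mult[symmetric])
  also have "\<dots> \<le> 1 + real m / N"
    using exp_le_one_plus_double[of "real m / (2 * N)"] assms by simp
  finally show ?thesis
    unfolding shift_factor_def .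
qed

lemma outer_term_eq_dominant_term:
  fixes n k :: nat and c :: real
  assumes "n > 0"
  shows "exp (pi * sqrt (2 * real n / 3)) / (4 * real n * sqrt 3)
           * (1 / (alpha ^ k * 24 powr (real k / 2)) * c / real n powr (real k / 2))
       = dominant_term n k * c"
proof -
  define s where "s = sqrt (24 * real n)"
  have "0 < s" "0 < alpha"
    using assms by (simp_all add: s_def alpha_def)
  have "pi * sqrt (2 * real n / 3) = alpha * s"
    using real_sqrt_mult[of 36 "2 * real n / 3"] by (simp add: alpha_def s_def)
  moreover have "alpha ^ k * 24 powr (real k / 2) * real n powr (real k / 2) = (alpha * s) ^ k"
    using assms powr_half_nat_eq_sqrt_power[of 24 k] powr_half_nat_eq_sqrt_power[of "real n" k]
    by (simp add: s_def real_sqrt_mult power_mult_distrib)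
  moreover have "sqrt 12 = 2 * sqrt 3"
    using real_sqrt_mult[of 4 3] by simp
  ultimately show ?thesis
    unfolding dominant_term_def s_def[symmetric] using assms \<open>0 < s\<close> \<open>0 < alpha\<close>
    by (simp add: field_simps flip: power2_eq_square)
qed

lemma mu_term_eq_dominant_term:
  fixes n k :: nat
  assumes "n > 0"
  shows "sqrt 12 * exp (mu n) / (24 * real n - 1) * (1 / mu n ^ k)
       = dominant_term n k * shift_factor alpha (24 * real n - 1) (k + 2)"
proof -
  define s where "s = sqrt (24 * real n)"
  define t where "t = sqrt (24 * real n - 1)"
  have "0 < t" "0 < s" "0 < alpha"
    using assms by (auto simp: s_def t_def alpha_def)
  have "sqrt 12 * exp (alpha * t) / t\<^sup>2 * (1 / (alpha * t) ^ k)
      = sqrt 12 * exp (alpha * s) / (s\<^sup>2 * (alpha * s) ^ k)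
        * (exp (alpha * (t - s)) * (s / t) ^ (k + 2))"
    using \<open>0 < t\<close> \<open>0 < s\<close> \<open>0 < alpha\<close>
    by (simp add: field_simps power_add power_mult_distrib power2_eq_square exp_diff)
  moreover have "s\<^sup>2 = 24 * real n" "t\<^sup>2 = 24 * real n - 1" "mu n = alpha * t"
    using assms by (simp_all add: s_def t_def mu_def alpha_def)
  ultimately show ?thesis
    by (simp add: dominant_term_def shift_factor_def s_def t_def)
qed

lemma dominant_term_pos: "n > 0 \<Longrightarrow> 0 < dominant_term n k"
  by (simp add: dominant_term_def alpha_def)

lemma shift_factor_lower_bound:
  assumes "n > 0"
  shows "1 - 1 / (4 * sqrt (real n)) < shift_factor alpha (24 * real n - 1) m"
proof -
  have alpha: "0 < alpha" "alpha \<le> 1"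
    using pi_less_4 by (simp_all add: alpha_def)
  have "4 * sqrt (real n) \<le> sqrt (24 * real n)"
    using real_sqrt_mult[of 24 "real n"] real_sqrt_le_mono[of 16 24] by (simp add: mult_right_mono)
  then have "1 - 1 / (4 * sqrt (real n)) \<le> 1 - alpha / sqrt (24 * real n - 1 + 1)"
    using assms alpha by (simp add: frac_le)
  also have "\<dots> < shift_factor alpha (24 * real n - 1) m"
    using assms alpha by (intro shift_factor_gt) auto
  finally show ?thesis .
qed

lemma shift_factor_upper_bound:
  assumes "k \<ge> 1" "k + 2 < 24 * n"
  shows "shift_factor alpha (24 * real n - 1) (k + 2) < 1 + real k / (3 * real n)"
proof -
  define N where "N = 24 * real n - 1"
  have "k + 3 \<le> 24 * n" "1 \<le> n"
    using assms(2) by linarith+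
  then have N_ge: "real (k + 2) \<le> N" and n_ge_1: "real n \<ge> 1"
    unfolding N_def by linarith+
  have "shift_factor alpha N (k + 2) < 1 + real (k + 2) / N"
    using N_ge by (intro shift_factor_lt) (simp_all add: alpha_def)
  also have "\<dots> \<le> 1 + real k / (3 * real n)"
  proof -
    have "real k \<le> real k * real n" "real n \<le> real k * real n"
      using assms(1) n_ge_1 by simp_all
    then have "3 * real n * real (k + 2) \<le> real k * N"
      unfolding N_def by (simp add: algebra_simps)
    then show ?thesis
      using N_ge n_ge_1 by (simp add: field_simps)
  qed
  finally show ?thesis
    unfolding N_def .
qed

theorem mainTheorem15:
  fixes k n :: nat
  assumes "k \<ge> 1" and "n > 0" and "real n > (real k + 2) / 24"
  shows "exp (pi * sqrt (2 * real n / 3)) / (4 * real n * sqrt 3) * (L2hat n k / real n powr (real k / 2))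
           < sqrt 12 * exp (mu n) / (24 * real n - 1) * (1 / mu n ^ k)
       \<and> sqrt 12 * exp (mu n) / (24 * real n - 1) * (1 / mu n ^ k)
           < exp (pi * sqrt (2 * real n / 3)) / (4 * real n * sqrt 3) * (U2hat n k / real n powr (real k / 2))"
proof -
  have "real (k + 2) < real (24 * n)"
    using assms(3) by simp
  then have "k + 2 < 24 * n"
    by linarith
  then show ?thesis
    unfolding L2hat_def U2hat_def outer_term_eq_dominant_term[OF assms(2)]
      mu_term_eq_dominant_term[OF assms(2)]
    using assms
    by (intro conjI mult_strict_left_mono shift_factor_lower_bound shift_factor_upper_bound
        dominant_term_pos)
qed

end
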